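(* For any inclusion $\mathcal X_0\subset\mathcal X$ of finite-dimensional operator systems and every $n\in\mathbb N$, $$\mathrm{Ind}_{\mathrm{CP}}(M_n(\mathcal X):M_n(\mathcal X_0))=\mathrm{Ind}_{\mathrm{CP}}(\mathcal X:\mathcal X_0).$$
   Context: For an operator system $\mathcal X$ with unit $1$, $\mathrm{CP}(\mathcal X)$ denotes the completely positive maps $\mathcal X\to\mathcal X$ and $\mathrm{CP}_1(\mathcal X)$ the set of $\varphi\in\mathrm{CP}(\mathcal X)$ with $\varphi(\mathbb C1)\subset\mathbb C1$. For an operator subsystem $\mathcal X_0\subset\mathcal X$, $\mathrm{Ind}_{\mathrm{CP}}(\mathcal X:\mathcal X_0)=\inf\{\|\varphi(1)\|:\varphi\in\mathrm{CP}_1(\mathcal X),\ \varphi(\mathcal X)\subset\mathcal X_0,\ \varphi-\mathrm{id}_{\mathcal X}\in\mathrm{CP}(\mathcal X)\}$ ($\infty$ if empty). $M_n(\mathcal X)$ carries its natural operator system structure (equal to $M_n\otimes_{\min}\mathcal X$), with $M_n(\mathcal X_0)$ a subsystem. *)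

theory Defs
  imports "HOL-Analysis.Analysis" "HOL-Library.Function_Algebras"
begin

class cvec = ab_group_add +
  fixes scaleC :: "complex \<Rightarrow> 'a \<Rightarrow> 'a" (infixr "*\<^sub>C" 75)
  assumes scaleC_add_right: "a *\<^sub>C (x + y) = a *\<^sub>C x + a *\<^sub>C y"
    and scaleC_add_left: "(a + b) *\<^sub>C x = a *\<^sub>C x + b *\<^sub>C x"
    and scaleC_scaleC: "a *\<^sub>C (b *\<^sub>C x) = (a * b) *\<^sub>C x"
    and scaleC_one: "1 *\<^sub>C x = x"

instantiation "fun" :: (type, cvec) cvec
begin
definition scaleC_fun :: "complex \<Rightarrow> ('a \<Rightarrow> 'b) \<Rightarrow> 'a \<Rightarrow> 'b"
  where "scaleC_fun c f = (\<lambda>x. c *\<^sub>C f x)"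
instance
  by standard (auto simp: scaleC_fun_def fun_eq_iff scaleC_add_right scaleC_add_left
      scaleC_scaleC scaleC_one)
end

definition csubspace :: "'a::cvec set \<Rightarrow> bool" where
  "csubspace V \<longleftrightarrow> 0 \<in> V \<and> (\<forall>x\<in>V. \<forall>y\<in>V. x + y \<in> V) \<and> (\<forall>c. \<forall>x\<in>V. c *\<^sub>C x \<in> V)"

definition cspan :: "'a::cvec set \<Rightarrow> 'a set" where
  "cspan S = {x. \<exists>T c. finite T \<and> T \<subseteq> S \<and> x = (\<Sum>t\<in>T. c t *\<^sub>C t)}"

definition fin_dim :: "'a::cvec set \<Rightarrow> bool" where
  "fin_dim V \<longleftrightarrow> (\<exists>S. finite S \<and> S \<subseteq> V \<and> V = cspan S)"

text \<open>Matrices over a set V are functions nat => nat => 'a; an n x n matrix is one vanishing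
  outside the index box {0..<n} x {0..<n}.\<close>

record 'a opsys =
  carrier :: "'a set"
  star :: "'a \<Rightarrow> 'a"
  unit :: 'a
  cone :: "nat \<Rightarrow> (nat \<Rightarrow> nat \<Rightarrow> 'a) set"

definition mat_in :: "nat \<Rightarrow> 'a::zero set \<Rightarrow> (nat \<Rightarrow> nat \<Rightarrow> 'a) \<Rightarrow> bool" where
  "mat_in n V A \<longleftrightarrow> (\<forall>i j. (i < n \<and> j < n \<longrightarrow> A i j \<in> V) \<and> (\<not> (i < n \<and> j < n) \<longrightarrow> A i j = 0))"

definition Mat :: "nat \<Rightarrow> 'a::zero set \<Rightarrow> (nat \<Rightarrow> nat \<Rightarrow> 'a) set" where
  "Mat n V = {A. mat_in n V A}"

definition mat_star :: "('a \<Rightarrow> 'a) \<Rightarrow> (nat \<Rightarrow> nat \<Rightarrow> 'a) \<Rightarrow> (nat \<Rightarrow> nat \<Rightarrow> 'a)" where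
  "mat_star s A = (\<lambda>i j. s (A j i))"

definition hermitian :: "('a \<Rightarrow> 'a) \<Rightarrow> (nat \<Rightarrow> nat \<Rightarrow> 'a) \<Rightarrow> bool" where
  "hermitian s A \<longleftrightarrow> mat_star s A = A"

definition diag_unit :: "nat \<Rightarrow> 'a::zero \<Rightarrow> (nat \<Rightarrow> nat \<Rightarrow> 'a)" where
  "diag_unit n e = (\<lambda>i j. if i = j \<and> i < n then e else 0)"

definition conj_by :: "nat \<Rightarrow> nat \<Rightarrow> (nat \<Rightarrow> nat \<Rightarrow> complex) \<Rightarrow> (nat \<Rightarrow> nat \<Rightarrow> 'a::cvec)
    \<Rightarrow> (nat \<Rightarrow> nat \<Rightarrow> 'a)" where
  "conj_by n m \<alpha> A = (\<lambda>k l. if k < m \<and> l < m then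
      (\<Sum>i<n. \<Sum>j<n. (cnj (\<alpha> i k) * \<alpha> j l) *\<^sub>C A i j) else 0)"

definition operator_system :: "'a::cvec opsys \<Rightarrow> bool" where
  "operator_system X \<longleftrightarrow>
     csubspace (carrier X) \<and>
     (\<forall>x\<in>carrier X. star X x \<in> carrier X \<and> star X (star X x) = x) \<and>
     (\<forall>x\<in>carrier X. \<forall>y\<in>carrier X. star X (x + y) = star X x + star X y) \<and>
     (\<forall>c. \<forall>x\<in>carrier X. star X (c *\<^sub>C x) = cnj c *\<^sub>C star X x) \<and>
     unit X \<in> carrier X \<and> star X (unit X) = unit X \<and>
     (\<forall>n. cone X n \<subseteq> {A \<in> Mat n (carrier X). hermitian (star X) A}) \<and>
     (\<forall>n. \<forall>A\<in>cone X n. \<forall>B\<in>cone X n. A + B \<in> cone X n) \<and>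
     (\<forall>n. \<forall>A\<in>cone X n. \<forall>r::real. r \<ge> 0 \<longrightarrow> complex_of_real r *\<^sub>C A \<in> cone X n) \<and>
     (\<forall>n. \<forall>A\<in>cone X n. - A \<in> cone X n \<longrightarrow> A = 0) \<and>
     (\<forall>n m \<alpha>. \<forall>A\<in>cone X n. conj_by n m \<alpha> A \<in> cone X m) \<and>
     (\<forall>n. \<forall>A\<in>Mat n (carrier X). hermitian (star X) A \<longrightarrow>
        (\<exists>r::real. r > 0 \<and> complex_of_real r *\<^sub>C diag_unit n (unit X) + A \<in> cone X n)) \<and>
     (\<forall>n. \<forall>A\<in>Mat n (carrier X). hermitian (star X) A \<longrightarrow>
        (\<forall>r::real. r > 0 \<longrightarrow> complex_of_real r *\<^sub>C diag_unit n (unit X) + A \<in> cone X n)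
        \<longrightarrow> A \<in> cone X n)"

definition fd_operator_system :: "'a::cvec opsys \<Rightarrow> bool" where
  "fd_operator_system X \<longleftrightarrow> operator_system X \<and> fin_dim (carrier X)"

definition subsystem :: "'a::cvec opsys \<Rightarrow> 'a opsys \<Rightarrow> bool" where
  "subsystem X0 X \<longleftrightarrow> operator_system X \<and>
     csubspace (carrier X0) \<and> carrier X0 \<subseteq> carrier X \<and>
     unit X0 = unit X \<and> star X0 = star X \<and>
     (\<forall>x\<in>carrier X0. star X x \<in> carrier X0) \<and>
     (\<forall>n. cone X0 n = cone X n \<inter> Mat n (carrier X0))"

text \<open>Matrix levels M_n(X): M_m(M_n(X)) is identified with M_{mn}(X).\<close>
definition flatten :: "nat \<Rightarrow> (nat \<Rightarrow> nat \<Rightarrow> (nat \<Rightarrow> nat \<Rightarrow> 'a)) \<Rightarrow> (nat \<Rightarrow> nat \<Rightarrow> 'a)" where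
  "flatten n B = (\<lambda>p q. B (p div n) (q div n) (p mod n) (q mod n))"

definition Mn_sys :: "nat \<Rightarrow> 'a::cvec opsys \<Rightarrow> (nat \<Rightarrow> nat \<Rightarrow> 'a) opsys" where
  "Mn_sys n X = \<lparr> carrier = Mat n (carrier X),
                  star = mat_star (star X),
                  unit = diag_unit n (unit X),
                  cone = (\<lambda>m. {B \<in> Mat m (Mat n (carrier X)). flatten n B \<in> cone X (m * n)}) \<rparr>"

definition clinear_on :: "'a::cvec set \<Rightarrow> ('a \<Rightarrow> 'a) \<Rightarrow> bool" where
  "clinear_on V f \<longleftrightarrow> (\<forall>x\<in>V. \<forall>y\<in>V. f (x + y) = f x + f y) \<and> (\<forall>c. \<forall>x\<in>V. f (c *\<^sub>C x) = c *\<^sub>C f x)"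

definition CP :: "'a::cvec opsys \<Rightarrow> ('a \<Rightarrow> 'a) set" where
  "CP X = {\<phi>. clinear_on (carrier X) \<phi> \<and> \<phi> ` carrier X \<subseteq> carrier X \<and>
             (\<forall>n. \<forall>A\<in>cone X n. (\<lambda>i j. \<phi> (A i j)) \<in> cone X n)}"

definition CP1 :: "'a::cvec opsys \<Rightarrow> ('a \<Rightarrow> 'a) set" where
  "CP1 X = {\<phi> \<in> CP X. \<forall>c. \<exists>d. \<phi> (c *\<^sub>C unit X) = d *\<^sub>C unit X}"

definition osnorm :: "'a::cvec opsys \<Rightarrow> 'a \<Rightarrow> real" where
  "osnorm X x = Inf {r::real. r \<ge> 0 \<and>
      (\<lambda>i j. if i = 0 \<and> j = 0 then complex_of_real r *\<^sub>C unit X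
             else if i = 0 \<and> j = 1 then x
             else if i = 1 \<and> j = 0 then star X x
             else if i = 1 \<and> j = 1 then complex_of_real r *\<^sub>C unit X
             else 0) \<in> cone X 2}"

definition Ind_CP :: "'a::cvec opsys \<Rightarrow> 'a opsys \<Rightarrow> ereal" where
  "Ind_CP X X0 = Inf {ereal (osnorm X (\<phi> (unit X))) | \<phi>.
      \<phi> \<in> CP1 X \<and> \<phi> ` carrier X \<subseteq> carrier X0 \<and> (\<lambda>x. \<phi> x - x) \<in> CP X}"

end

theory Submission
  imports Defs
begin

text \<open>
  Under the identification of \<open>M\<^sub>m(M\<^sub>n(X))\<close> with \<open>M\<^sub>m\<^sub>n(X)\<close>, a matrix \<open>P\<close> is positive over
  \<open>X\<close> iff its ampliation \<open>P \<otimes> I\<^sub>n\<close> is positive over \<open>M\<^sub>n(X)\<close>: one direction compresses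
  \<open>P \<otimes> I\<^sub>n\<close> to the principal submatrix on the indices \<open>0, n, 2n, \<dots>\<close>, the other writes
  \<open>P \<otimes> I\<^sub>n\<close> as a sum of \<open>n\<close> conjugates of \<open>P\<close>. Consequently \<open>x \<mapsto> x \<otimes> I\<^sub>n\<close> preserves the
  order norm. A map \<open>\<phi>\<close> admissible for the index of \<open>X\<^sub>0 \<subseteq> X\<close> acts entrywise on \<open>M\<^sub>n(X)\<close>, and a
  map \<open>\<Phi>\<close> admissible for \<open>M\<^sub>n(X\<^sub>0) \<subseteq> M\<^sub>n(X)\<close> compresses to \<open>x \<mapsto> \<Phi>(x \<otimes> I\<^sub>n)\<^sub>0\<^sub>0\<close>; both
  constructions preserve admissibility and the norm of the image of the unit, so the two
  infima range over the same set.
\<close>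

lemma scaleC_zero_left [simp]: "0 *\<^sub>C (x::'a::cvec) = 0"
  by (metis add_cancel_right_right add_0 scaleC_add_left)

lemma scaleC_zero_right [simp]: "c *\<^sub>C (0::'a::cvec) = 0"
  by (metis add_cancel_right_right add_0 scaleC_add_right)

lemma scaleC_indicator [simp]: "(if b then 1 else 0) *\<^sub>C (x::'a::cvec) = (if b then x else 0)"
  by (simp add: scaleC_one)

lemma scaleC_fun_apply [simp]: "(c *\<^sub>C f) x = c *\<^sub>C f x"
  by (simp add: scaleC_fun_def)

lemma sum_fun_apply: "finite S \<Longrightarrow> sum f S x = (\<Sum>k\<in>S. f k x)"
  by (induction S rule: finite_induct) auto

lemma clinear_on_zero: "clinear_on V f \<Longrightarrow> 0 \<in> V \<Longrightarrow> f 0 = 0"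
  unfolding clinear_on_def by (metis add.right_neutral add_left_cancel)

lemma operator_systemD:
  assumes "operator_system X"
  shows "csubspace (carrier X) \<and>
     (\<forall>x\<in>carrier X. star X x \<in> carrier X) \<and>
     (\<forall>c. \<forall>x\<in>carrier X. star X (c *\<^sub>C x) = cnj c *\<^sub>C star X x) \<and>
     unit X \<in> carrier X \<and>
     (\<forall>n. cone X n \<subseteq> Mat n (carrier X)) \<and>
     (\<forall>n. \<forall>A\<in>cone X n. \<forall>B\<in>cone X n. A + B \<in> cone X n) \<and>
     (\<forall>n m \<alpha>. \<forall>A\<in>cone X n. conj_by n m \<alpha> A \<in> cone X m)"
  using assms unfolding operator_system_def by (elim conjE) (intro conjI; blast)

context
  fixes X :: "'a::cvec opsys"
  assumes os: "operator_system X"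
begin

lemma operator_system_zero: "0 \<in> carrier X"
  using operator_systemD[OF os] unfolding csubspace_def by blast

lemma operator_system_scaleC: "x \<in> carrier X \<Longrightarrow> c *\<^sub>C x \<in> carrier X"
  using operator_systemD[OF os] unfolding csubspace_def by blast

lemma operator_system_unit: "unit X \<in> carrier X"
  using operator_systemD[OF os] by blast

lemma operator_system_star: "x \<in> carrier X \<Longrightarrow> star X x \<in> carrier X"
  using operator_systemD[OF os] by blast

lemma operator_system_star_zero: "star X 0 = 0"
proof -
  have "star X (0 *\<^sub>C 0) = cnj 0 *\<^sub>C star X 0"
    using operator_systemD[OF os] operator_system_zero by blast
  then show ?thesis by simp
qed

lemma cone_subset_Mat: "A \<in> cone X m \<Longrightarrow> A \<in> Mat m (carrier X)"
  using operator_systemD[OF os] by blast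

lemma cone_add: "A \<in> cone X m \<Longrightarrow> B \<in> cone X m \<Longrightarrow> A + B \<in> cone X m"
  using operator_systemD[OF os] by blast

lemma cone_conj_by: "A \<in> cone X n \<Longrightarrow> conj_by n m \<alpha> A \<in> cone X m"
  using operator_systemD[OF os] by blast

lemma cone_sum:
  "finite S \<Longrightarrow> S \<noteq> {} \<Longrightarrow> (\<And>k. k \<in> S \<Longrightarrow> f k \<in> cone X m) \<Longrightarrow> sum f S \<in> cone X m"
  by (induction S rule: finite_ne_induct) (auto intro: cone_add)

end

lemma Mat_iff:
  "A \<in> Mat n V \<longleftrightarrow> (\<forall>i j. (i < n \<and> j < n \<longrightarrow> A i j \<in> V) \<and> (\<not> (i < n \<and> j < n) \<longrightarrow> A i j = 0))"
  by (simp add: Mat_def mat_in_def)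

lemma diag_unit_Mat: "0 \<in> V \<Longrightarrow> x \<in> V \<Longrightarrow> diag_unit n x \<in> Mat n V"
  by (auto simp: Mat_iff diag_unit_def)

lemma diag_unit_zero [simp]: "diag_unit n 0 = 0"
  by (simp add: diag_unit_def fun_eq_iff)

lemma diag_unit_add: "diag_unit n (x + y) = diag_unit n x + diag_unit n (y::'a::cvec)"
  by (simp add: diag_unit_def fun_eq_iff)

lemma diag_unit_scaleC: "diag_unit n (c *\<^sub>C x) = c *\<^sub>C diag_unit n (x::'a::cvec)"
  by (simp add: diag_unit_def fun_eq_iff)

lemma diag_unit_0_0: "0 < n \<Longrightarrow> diag_unit n x 0 0 = x"
  by (simp add: diag_unit_def)

lemma mat_star_diag_unit: "s 0 = 0 \<Longrightarrow> mat_star s (diag_unit n x) = diag_unit n (s x)"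
  by (auto simp: diag_unit_def mat_star_def fun_eq_iff)

definition map_mat :: "('a \<Rightarrow> 'b) \<Rightarrow> (nat \<Rightarrow> nat \<Rightarrow> 'a) \<Rightarrow> (nat \<Rightarrow> nat \<Rightarrow> 'b)" where
  "map_mat f A = (\<lambda>i j. f (A i j))"

lemma map_mat_apply [simp]: "map_mat f A i j = f (A i j)"
  by (simp add: map_mat_def)

lemma map_mat_Mat:
  "(\<And>x. x \<in> V \<Longrightarrow> f x \<in> W) \<Longrightarrow> f 0 = 0 \<Longrightarrow> A \<in> Mat n V \<Longrightarrow> map_mat f A \<in> Mat n W"
  by (simp add: Mat_iff)

lemma map_mat_diag_unit: "f 0 = 0 \<Longrightarrow> map_mat f (diag_unit n x) = diag_unit n (f x)"
  by (auto simp: diag_unit_def fun_eq_iff)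

lemma CP_iff:
  "\<phi> \<in> CP X \<longleftrightarrow> clinear_on (carrier X) \<phi> \<and> \<phi> ` carrier X \<subseteq> carrier X \<and>
     (\<forall>n. \<forall>A\<in>cone X n. map_mat \<phi> A \<in> cone X n)"
  by (simp add: CP_def map_mat_def)

lemma conj_by_selection:
  assumes "\<And>k. k < m \<Longrightarrow> Q k \<Longrightarrow> g k < N"
  shows "conj_by N m (\<lambda>i k. if i = g k \<and> Q k then 1 else 0) (A :: nat \<Rightarrow> nat \<Rightarrow> 'a::cvec)
       = (\<lambda>k l. if k < m \<and> l < m \<and> Q k \<and> Q l then A (g k) (g l) else 0)"
proof (intro ext)
  fix k l
  have "(\<Sum>i<N. \<Sum>j<N. (cnj (if i = g k \<and> Q k then 1 else 0) * (if j = g l \<and> Q l then 1 else 0)) *\<^sub>C A i j)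
      = (\<Sum>i<N. if i = g k \<and> Q k then (\<Sum>j<N. if j = g l \<and> Q l then A i j else 0) else 0)"
    by (intro sum.cong) auto
  also have "\<dots> = (if Q k \<and> g k < N \<and> Q l \<and> g l < N then A (g k) (g l) else 0)"
    by (cases "Q k"; cases "Q l") (simp_all add: sum.delta)
  finally show "conj_by N m (\<lambda>i k. if i = g k \<and> Q k then 1 else 0) A k l
       = (if k < m \<and> l < m \<and> Q k \<and> Q l then A (g k) (g l) else 0)"
    using assms by (auto simp: conj_by_def)
qed

lemma cone_submatrix:
  assumes "operator_system X" "A \<in> cone X N" "\<And>k. k < m \<Longrightarrow> g k < N"
  shows "(\<lambda>k l. if k < m \<and> l < m then A (g k) (g l) else 0) \<in> cone X m"
proof -
  have "conj_by N m (\<lambda>i k. if i = g k \<and> True then 1 else 0) A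
      = (\<lambda>k l. if k < m \<and> l < m \<and> True \<and> True then A (g k) (g l) else 0)"
    by (rule conj_by_selection) (rule assms(3))
  with cone_conj_by[OF assms(1,2)] show ?thesis
    by (metis (no_types, lifting))
qed

lemma flatten_ampliation:
  "0 < n \<Longrightarrow> flatten n (map_mat (diag_unit n) P)
     = (\<lambda>p q. if p mod n = q mod n then P (p div n) (q div n) else 0)"
  by (auto simp: flatten_def diag_unit_def fun_eq_iff)

lemma ampliation_in_cone_Mn_iff:
  assumes os: "operator_system X" and n: "0 < n" and P: "P \<in> Mat m (carrier X)"
  shows "map_mat (diag_unit n) P \<in> cone (Mn_sys n X) m \<longleftrightarrow> P \<in> cone X m"
proof -
  define F where "F = flatten n (map_mat (diag_unit n) P)"
  have F: "F p q = (if p mod n = q mod n then P (p div n) (q div n) else 0)" for p q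
    by (simp add: F_def flatten_ampliation[OF n])
  have "map_mat (diag_unit n) P \<in> Mat m (Mat n (carrier X))"
    using P diag_unit_Mat[OF operator_system_zero[OF os]] by (intro map_mat_Mat) auto
  then have "map_mat (diag_unit n) P \<in> cone (Mn_sys n X) m \<longleftrightarrow> F \<in> cone X (m * n)"
    by (simp add: Mn_sys_def F_def)
  also have "\<dots> \<longleftrightarrow> P \<in> cone X m"
  proof
    assume "F \<in> cone X (m * n)"
    moreover have "(\<lambda>k l. if k < m \<and> l < m then F (k * n) (l * n) else 0) = P"
      using n P by (auto simp: F Mat_iff fun_eq_iff)
    ultimately show "P \<in> cone X m"
      using cone_submatrix[OF os, of F "m * n" m "\<lambda>k. k * n"] n by simp
  next
    assume PC: "P \<in> cone X m"
    define G where "G k = conj_by m (m * n) (\<lambda>i p. if i = p div n \<and> p mod n = k then 1 else 0) P" for k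
    have G: "G k = (\<lambda>p q. if p < m * n \<and> q < m * n \<and> p mod n = k \<and> q mod n = k
                      then P (p div n) (q div n) else 0)" for k
      unfolding G_def by (rule conj_by_selection) (simp add: less_mult_imp_div_less)
    have "sum G {..<n} \<in> cone X (m * n)"
      using n by (intro cone_sum[OF os]) (auto simp: G_def cone_conj_by[OF os PC])
    moreover have "sum G {..<n} = F"
    proof (intro ext)
      fix p q
      let ?entry = "if p < m * n \<and> q < m * n \<and> p mod n = q mod n then P (p div n) (q div n) else 0"
      have "sum G {..<n} p q = (\<Sum>k<n. if k = p mod n then ?entry else 0)"
        unfolding sum_fun_apply[OF finite_lessThan] G by (intro sum.cong) auto
      also have "\<dots> = ?entry"
        using n by simp
      also have "\<dots> = F p q"
        using P by (auto simp: F Mat_iff div_less_iff_less_mult n mult.commute)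
      finally show "sum G {..<n} p q = F p q" .
    qed
    ultimately show "F \<in> cone X (m * n)" by simp
  qed
  finally show ?thesis .
qed

definition unit_block :: "'a::cvec opsys \<Rightarrow> real \<Rightarrow> 'a \<Rightarrow> (nat \<Rightarrow> nat \<Rightarrow> 'a)" where
  "unit_block X r x = (\<lambda>i j. if i = 0 \<and> j = 0 then complex_of_real r *\<^sub>C unit X
             else if i = 0 \<and> j = 1 then x
             else if i = 1 \<and> j = 0 then star X x
             else if i = 1 \<and> j = 1 then complex_of_real r *\<^sub>C unit X
             else 0)"

lemma osnorm_unit_block: "osnorm X x = Inf {r. r \<ge> 0 \<and> unit_block X r x \<in> cone X 2}"
  by (simp add: osnorm_def unit_block_def)

lemma unit_block_Mat:
  "operator_system X \<Longrightarrow> x \<in> carrier X \<Longrightarrow> unit_block X r x \<in> Mat 2 (carrier X)"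
  by (auto simp: Mat_iff unit_block_def operator_system_zero operator_system_star
      operator_system_scaleC operator_system_unit)

lemma unit_block_Mn_diag_unit:
  "operator_system X \<Longrightarrow>
    unit_block (Mn_sys n X) r (diag_unit n x) = map_mat (diag_unit n) (unit_block X r x)"
  by (auto simp: unit_block_def Mn_sys_def mat_star_diag_unit operator_system_star_zero
      diag_unit_scaleC fun_eq_iff)

lemma osnorm_Mn_diag_unit:
  assumes "operator_system X" "0 < n" "x \<in> carrier X"
  shows "osnorm (Mn_sys n X) (diag_unit n x) = osnorm X x"
  using ampliation_in_cone_Mn_iff[OF assms(1,2) unit_block_Mat[OF assms(1,3)]]
  by (simp add: osnorm_unit_block unit_block_Mn_diag_unit[OF assms(1)])

lemma map_mat_CP_Mn:
  assumes os: "operator_system X" and \<phi>: "\<phi> \<in> CP X"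
  shows "map_mat \<phi> \<in> CP (Mn_sys n X)"
proof -
  have lin: "clinear_on (carrier X) \<phi>" and into: "\<And>x. x \<in> carrier X \<Longrightarrow> \<phi> x \<in> carrier X"
    and pos: "\<And>m A. A \<in> cone X m \<Longrightarrow> map_mat \<phi> A \<in> cone X m"
    using \<phi> by (auto simp: CP_iff)
  have zero: "\<phi> 0 = 0"
    using clinear_on_zero[OF lin operator_system_zero[OF os]] .
  have entries: "B \<in> Mat n (carrier X) \<Longrightarrow> B i j \<in> carrier X" for B i j
    using operator_system_zero[OF os] unfolding Mat_iff by metis
  have "clinear_on (Mat n (carrier X)) (map_mat \<phi>)"
    using lin entries by (auto simp: clinear_on_def fun_eq_iff)
  moreover have image: "map_mat \<phi> ` Mat n (carrier X) \<subseteq> Mat n (carrier X)"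
    using into zero map_mat_Mat by blast
  moreover have "map_mat (map_mat \<phi>) A \<in> cone (Mn_sys n X) m" if "A \<in> cone (Mn_sys n X) m" for m A
  proof -
    have A: "A \<in> Mat m (Mat n (carrier X))" and "flatten n A \<in> cone X (m * n)"
      using that by (auto simp: Mn_sys_def)
    moreover have "map_mat (map_mat \<phi>) A \<in> Mat m (Mat n (carrier X))"
      using image zero A by (intro map_mat_Mat[where V = "Mat n (carrier X)"]) (auto simp: fun_eq_iff)
    moreover have "flatten n (map_mat (map_mat \<phi>) A) = map_mat \<phi> (flatten n A)"
      by (simp add: flatten_def fun_eq_iff)
    ultimately show ?thesis
      using pos by (simp add: Mn_sys_def)
  qed
  ultimately show ?thesis
    by (simp add: CP_iff Mn_sys_def)
qed

definition compress :: "nat \<Rightarrow> ((nat \<Rightarrow> nat \<Rightarrow> 'a) \<Rightarrow> (nat \<Rightarrow> nat \<Rightarrow> 'a)) \<Rightarrow> 'a \<Rightarrow> 'a::zero" where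
  "compress n \<Phi> x = \<Phi> (diag_unit n x) 0 0"

lemma compress_CP:
  assumes os: "operator_system X" and n: "0 < n" and \<Phi>: "\<Phi> \<in> CP (Mn_sys n X)"
  shows "compress n \<Phi> \<in> CP X"
proof -
  have lin: "clinear_on (Mat n (carrier X)) \<Phi>"
    and into: "\<And>B. B \<in> Mat n (carrier X) \<Longrightarrow> \<Phi> B \<in> Mat n (carrier X)"
    and pos: "\<And>m A. A \<in> cone (Mn_sys n X) m \<Longrightarrow> map_mat \<Phi> A \<in> cone (Mn_sys n X) m"
    using \<Phi> by (auto simp: CP_iff Mn_sys_def)
  have diag: "x \<in> carrier X \<Longrightarrow> diag_unit n x \<in> Mat n (carrier X)" for x
    by (rule diag_unit_Mat[OF operator_system_zero[OF os]])
  have clin: "clinear_on (carrier X) (compress n \<Phi>)"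
    using lin diag by (simp add: clinear_on_def compress_def diag_unit_add diag_unit_scaleC)
  moreover have "compress n \<Phi> ` carrier X \<subseteq> carrier X"
    using into diag n by (auto simp: compress_def Mat_iff)
  moreover have "map_mat (compress n \<Phi>) A \<in> cone X m" if A: "A \<in> cone X m" for m A
  proof -
    have AM: "A \<in> Mat m (carrier X)"
      by (rule cone_subset_Mat[OF os A])
    have "map_mat \<Phi> (map_mat (diag_unit n) A) \<in> cone (Mn_sys n X) m"
      using pos ampliation_in_cone_Mn_iff[OF os n AM] A by blast
    then have flat: "flatten n (map_mat \<Phi> (map_mat (diag_unit n) A)) \<in> cone X (m * n)"
      by (simp add: Mn_sys_def)
    have "(\<lambda>k l. if k < m \<and> l < m
          then flatten n (map_mat \<Phi> (map_mat (diag_unit n) A)) (k * n) (l * n) else 0) \<in> cone X m"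
      using cone_submatrix[OF os flat, of m "\<lambda>k. k * n"] n by simp
    moreover have "(\<lambda>k l. if k < m \<and> l < m
          then flatten n (map_mat \<Phi> (map_mat (diag_unit n) A)) (k * n) (l * n) else 0)
        = map_mat (compress n \<Phi>) A"
      using n AM clinear_on_zero[OF clin operator_system_zero[OF os]]
      by (auto simp: flatten_def compress_def Mat_iff fun_eq_iff)
    ultimately show ?thesis by simp
  qed
  ultimately show ?thesis
    by (simp add: CP_iff)
qed

definition Ind_CP_witness :: "'a::cvec opsys \<Rightarrow> 'a opsys \<Rightarrow> ('a \<Rightarrow> 'a) \<Rightarrow> bool" where
  "Ind_CP_witness X X0 \<phi> \<longleftrightarrow> \<phi> \<in> CP1 X \<and> \<phi> ` carrier X \<subseteq> carrier X0 \<and> (\<lambda>x. \<phi> x - x) \<in> CP X"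

lemma Ind_CP_eqI:
  assumes "\<And>\<phi>. Ind_CP_witness X X0 \<phi> \<Longrightarrow>
      \<exists>\<psi>. Ind_CP_witness Y Y0 \<psi> \<and> osnorm Y (\<psi> (unit Y)) = osnorm X (\<phi> (unit X))"
    and "\<And>\<psi>. Ind_CP_witness Y Y0 \<psi> \<Longrightarrow>
      \<exists>\<phi>. Ind_CP_witness X X0 \<phi> \<and> osnorm X (\<phi> (unit X)) = osnorm Y (\<psi> (unit Y))"
  shows "Ind_CP Y Y0 = Ind_CP X X0"
proof -
  have "{ereal (osnorm Y (\<psi> (unit Y))) | \<psi>. Ind_CP_witness Y Y0 \<psi>}
      = {ereal (osnorm X (\<phi> (unit X))) | \<phi>. Ind_CP_witness X X0 \<phi>}"
    using assms by (smt (verit) Collect_cong)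
  then show ?thesis
    by (simp add: Ind_CP_def Ind_CP_witness_def)
qed

lemma Ind_CP_witness_map_mat:
  assumes os: "operator_system X" and n: "0 < n"
    and \<phi>: "Ind_CP_witness X X0 \<phi>"
  shows "Ind_CP_witness (Mn_sys n X) (Mn_sys n X0) (map_mat \<phi>)
    \<and> osnorm (Mn_sys n X) (map_mat \<phi> (unit (Mn_sys n X))) = osnorm X (\<phi> (unit X))"
proof -
  have CP: "\<phi> \<in> CP X" and unital: "\<And>c. \<exists>d. \<phi> (c *\<^sub>C unit X) = d *\<^sub>C unit X"
    and into: "\<phi> ` carrier X \<subseteq> carrier X0" and dominates: "(\<lambda>x. \<phi> x - x) \<in> CP X"
    using \<phi> by (auto simp: Ind_CP_witness_def CP1_def)
  have zero: "\<phi> 0 = 0"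
    using CP operator_system_zero[OF os] by (auto simp: CP_iff intro: clinear_on_zero)
  have "\<exists>d. map_mat \<phi> (c *\<^sub>C unit (Mn_sys n X)) = d *\<^sub>C unit (Mn_sys n X)" for c
    using unital[of c] zero
    by (auto simp: Mn_sys_def map_mat_diag_unit diag_unit_scaleC[symmetric])
  then have "map_mat \<phi> \<in> CP1 (Mn_sys n X)"
    using map_mat_CP_Mn[OF os CP] by (simp add: CP1_def)
  moreover have "map_mat \<phi> ` carrier (Mn_sys n X) \<subseteq> carrier (Mn_sys n X0)"
    using into zero map_mat_Mat[of "carrier X" \<phi> "carrier X0" _ n]
    by (auto simp: Mn_sys_def image_subset_iff)
  moreover have "(\<lambda>B. map_mat \<phi> B - B) = map_mat (\<lambda>x. \<phi> x - x)"
    by (simp add: fun_eq_iff)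
  moreover have "osnorm (Mn_sys n X) (map_mat \<phi> (unit (Mn_sys n X))) = osnorm X (\<phi> (unit X))"
    using osnorm_Mn_diag_unit[OF os n] CP operator_system_unit[OF os] zero
    by (auto simp: Mn_sys_def map_mat_diag_unit CP_iff)
  ultimately show ?thesis
    using map_mat_CP_Mn[OF os dominates] by (simp add: Ind_CP_witness_def)
qed

lemma Ind_CP_witness_compress:
  assumes os: "operator_system X" and n: "0 < n"
    and \<Phi>: "Ind_CP_witness (Mn_sys n X) (Mn_sys n X0) \<Phi>"
  shows "Ind_CP_witness X X0 (compress n \<Phi>)
    \<and> osnorm X (compress n \<Phi> (unit X)) = osnorm (Mn_sys n X) (\<Phi> (unit (Mn_sys n X)))"
proof -
  have CP: "\<Phi> \<in> CP (Mn_sys n X)"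
    and unital: "\<And>c. \<exists>d. \<Phi> (c *\<^sub>C diag_unit n (unit X)) = d *\<^sub>C diag_unit n (unit X)"
    and into: "\<Phi> ` Mat n (carrier X) \<subseteq> Mat n (carrier X0)"
    and dominates: "(\<lambda>B. \<Phi> B - B) \<in> CP (Mn_sys n X)"
    using \<Phi> by (auto simp: Ind_CP_witness_def CP1_def Mn_sys_def)
  have compress_unit: "compress n \<Phi> (c *\<^sub>C unit X) = d *\<^sub>C unit X"
    if "\<Phi> (c *\<^sub>C diag_unit n (unit X)) = d *\<^sub>C diag_unit n (unit X)" for c d
    using that n by (simp add: compress_def diag_unit_scaleC[symmetric] diag_unit_0_0)
  have "\<exists>d. compress n \<Phi> (c *\<^sub>C unit X) = d *\<^sub>C unit X" for c
    using unital[of c] compress_unit by blast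
  then have "compress n \<Phi> \<in> CP1 X"
    using compress_CP[OF os n CP] by (simp add: CP1_def)
  moreover have "compress n \<Phi> ` carrier X \<subseteq> carrier X0"
  proof
    fix y assume "y \<in> compress n \<Phi> ` carrier X"
    then obtain x where x: "x \<in> carrier X" and y: "y = \<Phi> (diag_unit n x) 0 0"
      by (auto simp: compress_def)
    have "\<Phi> (diag_unit n x) \<in> Mat n (carrier X0)"
      using into diag_unit_Mat[OF operator_system_zero[OF os] x] by blast
    then show "y \<in> carrier X0"
      using n y unfolding Mat_iff by blast
  qed
  moreover have "(\<lambda>x. compress n \<Phi> x - x) = compress n (\<lambda>B. \<Phi> B - B)"
    using n by (simp add: compress_def diag_unit_0_0 fun_eq_iff)
  moreover have "\<Phi> (unit (Mn_sys n X)) = diag_unit n (compress n \<Phi> (unit X))"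
  proof -
    obtain d where d: "\<Phi> (1 *\<^sub>C diag_unit n (unit X)) = d *\<^sub>C diag_unit n (unit X)"
      using unital by blast
    then have "compress n \<Phi> (unit X) = d *\<^sub>C unit X"
      using compress_unit[OF d] by (simp add: scaleC_one)
    with d show ?thesis
      by (simp add: Mn_sys_def diag_unit_scaleC scaleC_one)
  qed
  moreover have "compress n \<Phi> (unit X) \<in> carrier X"
    using compress_CP[OF os n CP] operator_system_unit[OF os] by (auto simp: CP_iff)
  ultimately show ?thesis
    using compress_CP[OF os n dominates] osnorm_Mn_diag_unit[OF os n]
    by (simp add: Ind_CP_witness_def)
qed

theorem corollary3p11:
  fixes X X0 :: "'a::cvec opsys" and n :: nat
  assumes "fd_operator_system X"
    and "subsystem X0 X"
    and "n \<ge> 1"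
  shows "Ind_CP (Mn_sys n X) (Mn_sys n X0) = Ind_CP X X0"
proof (rule Ind_CP_eqI)
  have os: "operator_system X" and n: "0 < n"
    using assms(1,3) by (simp_all add: fd_operator_system_def)
  show "\<exists>\<Phi>. Ind_CP_witness (Mn_sys n X) (Mn_sys n X0) \<Phi>
      \<and> osnorm (Mn_sys n X) (\<Phi> (unit (Mn_sys n X))) = osnorm X (\<phi> (unit X))"
    if "Ind_CP_witness X X0 \<phi>" for \<phi>
    using Ind_CP_witness_map_mat[OF os n that] by blast
  show "\<exists>\<phi>. Ind_CP_witness X X0 \<phi> \<and> osnorm X (\<phi> (unit X)) = osnorm (Mn_sys n X) (\<Phi> (unit (Mn_sys n X)))"
    if "Ind_CP_witness (Mn_sys n X) (Mn_sys n X0) \<Phi>" for \<Phi>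
    using Ind_CP_witness_compress[OF os n that] by blast
qed

end
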